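(* For every $\mu\in\mathbb F_q\setminus\{0\}$, the elliptic quadric $\mathcal Q_\mu$ is a $\left(\frac{q^n-1}{q-1}\right)$-ovoid of $\mathcal W_0$, i.e. every generator of $\mathcal W_0$ contains exactly $\frac{q^n-1}{q-1}$ points of $\mathcal Q_\mu$. (Note that for $\mu\neq0$ the quadric $\mathcal Q_\mu$ does not polarize to $\mathcal W_0$.)
   Context: Let $q$ be an even prime power and $n\ge 2$ an integer. Let $\mathrm{PG}(2n+1,q)$ have homogeneous coordinates $(X_1,\dots,X_{2n+2})$. Fix $\delta\in\mathbb F_q$ such that $X^2+X+\delta$ is irreducible over $\mathbb F_q$. For $\mu\in\mathbb F_q$ let $\mathcal Q_\mu$ be the quadric $X_1^2+X_1X_{2n+2}+\delta X_{2n+2}^2+\sum_{i=2}^{n+1}X_iX_{2n+3-i}+\mu(X_{2n}^2+X_{2n}X_{2n+1}+\delta X_{2n+1}^2)=0$, an elliptic quadric. Let $\mathcal W_0$ be the symplectic polar space defined by the alternating form $B_0(X,Y)=\sum_{i=1}^{2n+2}X_iY_{2n+3-i}$ (the polar space to which $\mathcal Q_0$ polarizes); its generators are the totally isotropic $n$-spaces. An $m$-ovoid of a symplectic polar space is a set of points meeting every generator in exactly $m$ points. *)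

theory Defs
  imports Main "HOL-Computational_Algebra.Polynomial"
begin

text \<open>Vectors of F^(2n+2) are functions nat => 'a supported on the coordinate
  indices {1..2n+2} (coordinates X_1,...,X_(2n+2)).\<close>

definition vecs :: "nat \<Rightarrow> (nat \<Rightarrow> 'a::field) set" where
  "vecs n = {x. \<forall>i. i \<notin> {1..2*n+2} \<longrightarrow> x i = 0}"

definition vsmult :: "'a::field \<Rightarrow> (nat \<Rightarrow> 'a) \<Rightarrow> nat \<Rightarrow> 'a" where
  "vsmult c x = (\<lambda>i. c * x i)"

definition lincomb :: "nat \<Rightarrow> (nat \<Rightarrow> 'a::field) \<Rightarrow> (nat \<Rightarrow> nat \<Rightarrow> 'a) \<Rightarrow> nat \<Rightarrow> 'a" where
  "lincomb k c b = (\<lambda>i. \<Sum>j<k. c j * b j i)"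

text \<open>W is a vector subspace of F^(2n+2) of (vector) dimension k, i.e. a projective
  (k-1)-space of PG(2n+1,q): it has a basis of k linearly independent vectors.\<close>
definition subspace_dim :: "nat \<Rightarrow> nat \<Rightarrow> (nat \<Rightarrow> 'a::field) set \<Rightarrow> bool" where
  "subspace_dim n k W \<longleftrightarrow>
     (\<exists>b. (\<forall>j<k. b j \<in> vecs n) \<and>
          (\<forall>c. lincomb k c b = (\<lambda>_. 0) \<longrightarrow> (\<forall>j<k. c j = 0)) \<and>
          W = {lincomb k c b | c. True})"

definition proj_points :: "nat \<Rightarrow> (nat \<Rightarrow> 'a::field) set set" where
  "proj_points n = {P. subspace_dim n 1 P}"

definition B0 :: "nat \<Rightarrow> (nat \<Rightarrow> 'a::field) \<Rightarrow> (nat \<Rightarrow> 'a) \<Rightarrow> 'a" where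
  "B0 n x y = (\<Sum>i=1..2*n+2. x i * y (2*n+3-i))"

definition generators_W0 :: "nat \<Rightarrow> (nat \<Rightarrow> 'a::field) set set" where
  "generators_W0 n = {W. subspace_dim n (n+1) W \<and> (\<forall>x\<in>W. \<forall>y\<in>W. B0 n x y = 0)}"

definition Qform :: "nat \<Rightarrow> 'a::field \<Rightarrow> 'a \<Rightarrow> (nat \<Rightarrow> 'a) \<Rightarrow> 'a" where
  "Qform n \<delta> \<mu> x =
     x 1 ^ 2 + x 1 * x (2*n+2) + \<delta> * x (2*n+2) ^ 2
     + (\<Sum>i=2..n+1. x i * x (2*n+3-i))
     + \<mu> * (x (2*n) ^ 2 + x (2*n) * x (2*n+1) + \<delta> * x (2*n+1) ^ 2)"

definition quadric :: "nat \<Rightarrow> 'a::field \<Rightarrow> 'a \<Rightarrow> (nat \<Rightarrow> 'a) set set" where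
  "quadric n \<delta> \<mu> = {P \<in> proj_points n. \<forall>x\<in>P. Qform n \<delta> \<mu> x = 0}"

definition m_ovoid_W0 :: "nat \<Rightarrow> nat \<Rightarrow> (nat \<Rightarrow> 'a::field) set set \<Rightarrow> bool" where
  "m_ovoid_W0 n m S \<longleftrightarrow> S \<subseteq> proj_points n \<and>
     (\<forall>W \<in> generators_W0 n. card {P \<in> S. P \<subseteq> W} = m)"

end

theory Submission
  imports Defs "HOL-Library.FuncSet" "HOL-Library.Function_Algebras" "HOL-Library.Cardinality"
begin

(* Let W be a generator of W_0. In characteristic 2, Q_0 is additive on W because W is totally
  isotropic for the polar form B_0 of Q_0; the same holds for Q_mu along vectors vanishing at X_2n
  and X_2n+1, where the mu-term lives. Deleting the hyperbolic pairs (X_i, X_2n+3-i) one at a time,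
  which shrinks a totally isotropic subspace by at most a factor q, and using that
  X_1^2 + X_1 X_2n+2 + delta X_2n+2^2 is anisotropic, one finds w in W vanishing at
  X_n+2, ..., X_2n+1 with Q_0(w) <> 0, because |W| = q^(n+1) > q^n. Then
  Q_mu(x + t w) = Q_mu(x) + t^2 Q_mu(w) for x in W, and squaring is bijective, so every coset
  x + F w in W contains exactly one zero of Q_mu. Hence Q_mu has q^n zeros in W, which form
  (q^n - 1)/(q - 1) points. *)

definition norm_form :: "'a::field \<Rightarrow> 'a \<Rightarrow> 'a \<Rightarrow> 'a" where
  "norm_form \<delta> s t = s^2 + s*t + \<delta>*t^2"

lemma norm_form_eq_0_iff:
  fixes \<delta> s t :: "'a::field"
  assumes irr: "irreducible [:\<delta>, 1, 1:]"
  shows "norm_form \<delta> s t = 0 \<longleftrightarrow> s = 0 \<and> t = 0"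
proof
  assume st: "norm_form \<delta> s t = 0"
  show "s = 0 \<and> t = 0"
  proof (rule ccontr)
    assume "\<not> (s = 0 \<and> t = 0)"
    with st have "t \<noteq> 0" by (auto simp: norm_form_def)
    with st have "poly [:\<delta>, 1, 1:] (s / t) = 0"
      by (simp add: norm_form_def field_simps power2_eq_square)
    then have "[:- (s / t), 1:] dvd [:\<delta>, 1, 1:]" by (simp only: poly_eq_0_iff_dvd)
    with irr have "[:\<delta>, 1, 1:] dvd [:- (s / t), 1:]"
      by (auto dest: irreducibleD' simp: is_unit_poly_iff)
    then show False by (auto dest: dvd_imp_degree_le)
  qed
qed (simp add: norm_form_def)

lemma surj_power2_CHAR_2:
  assumes "CHAR('a::{field,finite}) = 2"
  shows "surj (\<lambda>s::'a. s^2)"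
proof -
  have two: "(2::'a) = 0" using of_nat_CHAR[where 'a='a] assms by simp
  have "s = t" if "s^2 = t^2" for s t :: 'a
  proof -
    have "(s + t)^2 = s^2 - t^2" using two by (simp add: power2_sum minus_CHAR_2[OF assms])
    then have "s = - t" using that by (simp add: eq_neg_iff_add_eq_0)
    then show "s = t" using uminus_CHAR_2[OF assms, of t] by simp
  qed
  then have "inj (\<lambda>s::'a. s^2)" by (rule injI)
  then show ?thesis by (simp add: finite_UNIV_inj_surj)
qed

lemma two_le_CARD: "2 \<le> CARD('a::{field,finite})"
proof -
  have "card {0::'a, 1} \<le> CARD('a)" by (rule card_mono) simp_all
  then show ?thesis by simp
qed

lemma vsmult_apply [simp]: "vsmult c x i = c * x i"
  by (simp add: vsmult_def)

lemma vsmult_vsmult: "vsmult c (vsmult d v) = vsmult (c * d) v"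
  by (simp add: vsmult_def mult.assoc)

definition linear_subspace :: "(nat \<Rightarrow> 'a::field) set \<Rightarrow> bool" where
  "linear_subspace S \<longleftrightarrow> 0 \<in> S \<and> (\<forall>x\<in>S. \<forall>y\<in>S. x + y \<in> S) \<and> (\<forall>c. \<forall>x\<in>S. vsmult c x \<in> S)"

lemma linear_subspace_zero: "linear_subspace S \<Longrightarrow> 0 \<in> S"
  and linear_subspace_add: "linear_subspace S \<Longrightarrow> x \<in> S \<Longrightarrow> y \<in> S \<Longrightarrow> x + y \<in> S"
  and linear_subspace_vsmult: "linear_subspace S \<Longrightarrow> x \<in> S \<Longrightarrow> vsmult c x \<in> S"
  by (simp_all add: linear_subspace_def)

lemma linear_subspace_diff:
  assumes "linear_subspace S" "x \<in> S" "y \<in> S"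
  shows "x - y \<in> S"
proof -
  have "x - y = x + vsmult (-1) y" by (simp add: fun_eq_iff)
  then show ?thesis using assms by (metis linear_subspace_add linear_subspace_vsmult)
qed

lemma lincomb_add: "lincomb k c b + lincomb k c' b = lincomb k (\<lambda>j. c j + c' j) b"
  and lincomb_diff: "lincomb k c b - lincomb k c' b = lincomb k (\<lambda>j. c j - c' j) b"
  and vsmult_lincomb: "vsmult d (lincomb k c b) = lincomb k (\<lambda>j. d * c j) b"
  and lincomb_zero: "lincomb k (\<lambda>_. 0) b = 0"
  by (simp_all add: lincomb_def vsmult_def fun_eq_iff algebra_simps sum.distrib sum_subtractf
      sum_distrib_left)

lemma lincomb_restrict: "lincomb k (restrict c {..<k}) b = lincomb k c b"
  by (simp add: lincomb_def)

lemma subspace_dim_linear_subspace: "subspace_dim n k W \<Longrightarrow> linear_subspace W"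
  unfolding subspace_dim_def linear_subspace_def
  by (auto simp: lincomb_add vsmult_lincomb) (metis lincomb_zero)

lemma subspace_dim_subset_vecs: "subspace_dim n k W \<Longrightarrow> W \<subseteq> vecs n"
  by (auto simp: subspace_dim_def vecs_def lincomb_def)

lemma card_subspace_dim:
  assumes "subspace_dim n k (W :: (nat \<Rightarrow> 'a::{field,finite}) set)"
  shows "card W = CARD('a) ^ k"
proof -
  obtain b where indep: "\<And>c. lincomb k c b = 0 \<Longrightarrow> \<forall>j<k. c j = 0"
    and W: "W = {lincomb k c b | c. True}"
    using assms unfolding subspace_dim_def zero_fun_def by blast
  let ?coeffs = "PiE {..<k} (\<lambda>_. UNIV :: 'a set)"
  have "W = (\<lambda>c. lincomb k c b) ` ?coeffs"
  proof (intro equalityI subsetI)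
    fix x assume "x \<in> W"
    then obtain c where "x = lincomb k c b" unfolding W by blast
    then show "x \<in> (\<lambda>c. lincomb k c b) ` ?coeffs"
      by (intro image_eqI[of _ _ "restrict c {..<k}"]) (simp_all add: lincomb_restrict)
  qed (auto simp: W)
  moreover have "inj_on (\<lambda>c. lincomb k c b) ?coeffs"
  proof (rule inj_onI)
    fix c c' assume "c \<in> ?coeffs" "c' \<in> ?coeffs" "lincomb k c b = lincomb k c' b"
    moreover from this(3) have "\<forall>j<k. c j = c' j"
      using indep[of "\<lambda>j. c j - c' j"] by (simp add: lincomb_diff [symmetric])
    ultimately show "c = c'"
      by (metis PiE_E ext lessThan_iff)
  qed
  ultimately show ?thesis by (simp add: card_image card_PiE)
qed

lemma finite_subspace_dim:
  assumes "subspace_dim n k (W :: (nat \<Rightarrow> 'a::{field,finite}) set)"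
  shows "finite W"
  using card_subspace_dim[OF assms] by (intro card_ge_0_finite) simp

definition span_of :: "(nat \<Rightarrow> 'a::field) \<Rightarrow> (nat \<Rightarrow> 'a) set" where
  "span_of v = range (\<lambda>c. vsmult c v)"

lemma zero_in_span_of: "0 \<in> span_of v"
  by (auto simp: span_of_def fun_eq_iff intro: range_eqI[of _ _ 0])

lemma self_in_span_of: "v \<in> span_of v"
  by (auto simp: span_of_def fun_eq_iff intro: range_eqI[of _ _ 1])

lemma span_of_eq:
  assumes "x \<in> span_of v" "x \<noteq> 0"
  shows "span_of x = span_of v"
proof -
  obtain d where x: "x = vsmult d v" using assms(1) by (auto simp: span_of_def)
  with assms(2) have "d \<noteq> 0" by (auto simp: fun_eq_iff)
  then have "range (\<lambda>c. c * d) = UNIV" by (metis UNIV_eq_I nonzero_divide_eq_eq rangeI)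
  moreover have "span_of x = (\<lambda>c. vsmult c v) ` range (\<lambda>c. c * d)"
    by (simp add: span_of_def x vsmult_vsmult image_image)
  ultimately show ?thesis by (simp add: span_of_def)
qed

lemma card_span_of_minus_zero:
  assumes "v \<noteq> (0 :: nat \<Rightarrow> 'a::{field,finite})"
  shows "card (span_of v - {0}) = CARD('a) - 1"
proof -
  obtain i where "v i \<noteq> 0" using assms by (auto simp: fun_eq_iff)
  then have "inj (\<lambda>c. vsmult c v)" by (auto intro!: injI simp: fun_eq_iff)
  then show ?thesis by (simp add: span_of_def zero_in_span_of [unfolded span_of_def] card_image)
qed

lemma proj_points_iff: "P \<in> proj_points n \<longleftrightarrow> (\<exists>v\<in>vecs n. v \<noteq> 0 \<and> P = span_of v)"
proof -
  have lincomb1: "lincomb (Suc 0) c b = vsmult (c 0) (b 0)" for c :: "nat \<Rightarrow> 'a" and b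
    by (simp add: lincomb_def vsmult_def)
  have span: "{lincomb 1 c b | c. True} = span_of (b 0)" for b :: "nat \<Rightarrow> nat \<Rightarrow> 'a"
  proof (intro equalityI subsetI)
    fix x assume "x \<in> span_of (b 0)"
    then obtain d where "x = vsmult d (b 0)" by (auto simp: span_of_def)
    then have "x = lincomb 1 (\<lambda>_. d) b" by (simp add: lincomb1)
    then show "x \<in> {lincomb 1 c b | c. True}" by blast
  qed (auto simp: lincomb1 span_of_def)
  have indep: "(\<forall>c. lincomb 1 c b = (\<lambda>_. 0) \<longrightarrow> (\<forall>j<1. c j = 0)) \<longleftrightarrow> b 0 \<noteq> 0"
    for b :: "nat \<Rightarrow> nat \<Rightarrow> 'a"
  proof
    assume "\<forall>c. lincomb 1 c b = (\<lambda>_. 0) \<longrightarrow> (\<forall>j<1. c j = 0)"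
    then have "lincomb 1 (\<lambda>_. 1) b \<noteq> (\<lambda>_. 0)" by auto
    then show "b 0 \<noteq> 0" by (auto simp: lincomb1 fun_eq_iff)
  qed (auto simp: lincomb1 fun_eq_iff)
  have "P \<in> proj_points n \<longleftrightarrow> (\<exists>b :: nat \<Rightarrow> nat \<Rightarrow> 'a. b 0 \<in> vecs n \<and> b 0 \<noteq> 0 \<and> P = span_of (b 0))"
    unfolding proj_points_def subspace_dim_def mem_Collect_eq indep span by simp
  also have "\<dots> \<longleftrightarrow> (\<exists>v\<in>vecs n. v \<noteq> 0 \<and> P = span_of v)"
  proof
    assume "\<exists>v\<in>vecs n. v \<noteq> 0 \<and> P = span_of v"
    then obtain v where "v \<in> vecs n" "v \<noteq> 0" "P = span_of v" by blast
    then show "\<exists>b. b 0 \<in> vecs n \<and> b 0 \<noteq> 0 \<and> P = span_of (b 0)" by (intro exI[of _ "\<lambda>_. v"]) simp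
  qed blast
  finally show ?thesis .
qed

lemma card_points_in_cone:
  fixes Z :: "(nat \<Rightarrow> 'a::{field,finite}) set"
  assumes "finite Z" "Z \<subseteq> vecs n" and cone: "\<And>c x. x \<in> Z \<Longrightarrow> vsmult c x \<in> Z"
  shows "(CARD('a) - 1) * card {P \<in> proj_points n. P \<subseteq> Z} = card (Z - {0})"
proof -
  let ?Pts = "{P \<in> proj_points n. P \<subseteq> Z}"
  have fin: "finite ?Pts" using \<open>finite Z\<close> by (auto intro: finite_subset[of _ "Pow Z"])
  have cover: "Z - {0} = (\<Union>P\<in>?Pts. P - {0})"
  proof (intro equalityI subsetI)
    fix x assume x: "x \<in> Z - {0}"
    then have "span_of x \<subseteq> Z" using cone by (auto simp: span_of_def)
    with x assms(2) have "span_of x \<in> ?Pts" by (auto simp: proj_points_iff)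
    moreover have "x \<in> span_of x - {0}" using x self_in_span_of by blast
    ultimately show "x \<in> (\<Union>P\<in>?Pts. P - {0})" by blast
  qed auto
  have disjoint: "(P - {0}) \<inter> (P' - {0}) = {}"
    if pts: "P \<in> ?Pts" "P' \<in> ?Pts" and "P \<noteq> P'" for P P'
  proof (rule ccontr)
    assume "(P - {0}) \<inter> (P' - {0}) \<noteq> {}"
    then obtain x where x: "x \<in> P" "x \<in> P'" "x \<noteq> 0" by blast
    obtain v v' where "P = span_of v" "P' = span_of v'"
      using pts by (auto simp: proj_points_iff)
    with x have "P = span_of x" "P' = span_of x" by (metis span_of_eq)+
    with \<open>P \<noteq> P'\<close> show False by simp
  qed
  have "finite (P - {0})" if "P \<in> ?Pts" for P
    using that \<open>finite Z\<close> by (auto intro: finite_subset)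
  then have "card (Z - {0}) = (\<Sum>P\<in>?Pts. card (P - {0}))"
    unfolding cover using fin disjoint by (intro card_UN_disjoint) auto
  also have "\<dots> = (\<Sum>P\<in>?Pts. CARD('a) - 1)"
    using card_span_of_minus_zero by (intro sum.cong) (auto simp: proj_points_iff)
  finally show ?thesis by simp
qed

lemma card_le_CARD_mult_card:
  fixes f :: "'b \<times> 'a::finite \<Rightarrow> 'c"
  assumes "finite A" "S \<subseteq> f ` (A \<times> UNIV)"
  shows "card S \<le> CARD('a) * card A"
proof -
  have "card S \<le> card (f ` (A \<times> UNIV))" using assms by (intro card_mono) auto
  also have "\<dots> \<le> card (A \<times> (UNIV :: 'a set))" by (rule card_image_le) (use assms in simp)
  finally show ?thesis by (simp add: card_cartesian_product mult.commute)
qed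

lemma card_le_card_coord_hyperplane:
  fixes S :: "(nat \<Rightarrow> 'a::{field,finite}) set"
  assumes S: "linear_subspace S" "finite S"
  shows "card S \<le> CARD('a) * card {x\<in>S. x b = 0}"
proof (cases "\<exists>z\<in>S. z b \<noteq> 0")
  case True
  then obtain z where z: "z \<in> S" "z b \<noteq> 0" by blast
  let ?S\<^sub>0 = "{x\<in>S. x b = 0}"
  have "S \<subseteq> (\<lambda>(y, t). y + vsmult t z) ` (?S\<^sub>0 \<times> UNIV)"
  proof
    fix x assume "x \<in> S"
    let ?t = "x b / z b"
    have "x - vsmult ?t z \<in> S"
      using S z \<open>x \<in> S\<close> by (simp add: linear_subspace_diff linear_subspace_vsmult)
    moreover have "(x - vsmult ?t z) b = 0" using z by simp
    ultimately have "x - vsmult ?t z \<in> ?S\<^sub>0" by simp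
    then show "x \<in> (\<lambda>(y, t). y + vsmult t z) ` (?S\<^sub>0 \<times> UNIV)"
      by (intro rev_image_eqI[of "(x - vsmult ?t z, ?t)"]) simp_all
  qed
  then show ?thesis using S(2) by (intro card_le_CARD_mult_card) auto
next
  case False
  then have "{x\<in>S. x b = 0} = S" by auto
  then show ?thesis by simp
qed

lemma card_le_card_zero_coord:
  fixes S :: "(nat \<Rightarrow> 'a::{field,finite}) set"
  assumes "finite S"
  shows "card S \<le> CARD('a) * card ((\<lambda>x. x(a := 0)) ` S)"
proof -
  let ?S' = "(\<lambda>x. x(a := 0)) ` S"
  have "S \<subseteq> (\<lambda>(y, t). y(a := t)) ` (?S' \<times> UNIV)"
  proof
    fix x assume "x \<in> S"
    then show "x \<in> (\<lambda>(y, t). y(a := t)) ` (?S' \<times> UNIV)"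
      by (intro rev_image_eqI[of "(x(a := 0), x a)"]) simp_all
  qed
  then show ?thesis using assms by (intro card_le_CARD_mult_card) auto
qed

lemma inj_on_zero_coord:
  assumes S: "linear_subspace S" and "0(a := 1) \<notin> S"
  shows "inj_on (\<lambda>x. x(a := 0)) S"
proof (rule inj_onI)
  fix x y assume xy: "x \<in> S" "y \<in> S" "x(a := 0) = y(a := 0)"
  show "x = y"
  proof (rule ccontr)
    assume "x \<noteq> y"
    with xy(3) have "x a \<noteq> y a" by (metis fun_upd_triv fun_upd_upd)
    moreover have "x i = y i" if "i \<noteq> a" for i using fun_cong[OF xy(3), of i] that by simp
    ultimately have "0(a := 1) = vsmult (1 / (x a - y a)) (x - y)" by (auto simp: fun_eq_iff)
    moreover have "vsmult (1 / (x a - y a)) (x - y) \<in> S"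
      using S xy by (simp add: linear_subspace_diff linear_subspace_vsmult)
    ultimately show False using assms(2) by simp
  qed
qed

(* For the isotropic point e_a, whose perp is X_b = 0, this realises (S \<inter> e_a^perp)/<e_a>
  inside the coordinates. *)
definition coord_quotient :: "nat \<Rightarrow> nat \<Rightarrow> (nat \<Rightarrow> 'a::zero) set \<Rightarrow> (nat \<Rightarrow> 'a) set" where
  "coord_quotient a b S = (\<lambda>x. x(a := 0)) ` {x\<in>S. x b = 0}"

lemma linear_subspace_coord_quotient:
  assumes S: "linear_subspace S"
  shows "linear_subspace (coord_quotient a b S)" (is "linear_subspace ?T")
proof -
  have "0 \<in> ?T" using linear_subspace_zero[OF S]
    by (auto simp: coord_quotient_def fun_eq_iff intro!: image_eqI[of _ _ 0])
  moreover have "u + v \<in> ?T" if uv: "u \<in> ?T" "v \<in> ?T" for u v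
  proof -
    obtain x y where "x \<in> S" "y \<in> S" "x b = 0" "y b = 0" "u = x(a := 0)" "v = y(a := 0)"
      using uv by (auto simp: coord_quotient_def elim!: imageE)
    with S show ?thesis
      by (auto simp: coord_quotient_def linear_subspace_add intro!: image_eqI[of _ _ "x + y"])
  qed
  moreover have "vsmult c u \<in> ?T" if u: "u \<in> ?T" for u c
  proof -
    obtain x where "x \<in> S" "x b = 0" "u = x(a := 0)" using u by (auto simp: coord_quotient_def)
    with S show ?thesis
      by (auto simp: coord_quotient_def linear_subspace_vsmult fun_eq_iff
          intro!: image_eqI[of _ _ "vsmult c x"])
  qed
  ultimately show ?thesis by (simp add: linear_subspace_def)
qed

lemma card_le_card_coord_quotient:
  fixes S :: "(nat \<Rightarrow> 'a::{field,finite}) set"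
  assumes S: "linear_subspace S" "finite S"
    and radical: "0(a := 1) \<in> S \<Longrightarrow> \<forall>x\<in>S. x b = 0"
  shows "card S \<le> CARD('a) * card (coord_quotient a b S)"
proof (cases "0(a := 1) \<in> S")
  case True
  with radical have "{x\<in>S. x b = 0} = S" by auto
  with S(2) show ?thesis by (simp add: coord_quotient_def card_le_card_zero_coord)
next
  case False
  then have "inj_on (\<lambda>x. x(a := 0)) {x\<in>S. x b = 0}"
    using S(1) by (auto intro: inj_on_subset[OF inj_on_zero_coord])
  with S show ?thesis by (simp add: coord_quotient_def card_image card_le_card_coord_hyperplane)
qed

lemma card_eq_CARD_mult_card_zeros:
  fixes f :: "(nat \<Rightarrow> 'a::{field,finite}) \<Rightarrow> 'a"
  assumes W: "linear_subspace W" "w \<in> W" and "c \<noteq> 0" and sq: "surj (\<lambda>s::'a. s^2)"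
    and shift: "\<And>x t. x \<in> W \<Longrightarrow> f (x + vsmult t w) = f x + t^2 * c"
  shows "card W = CARD('a) * card {x\<in>W. f x = 0}"
proof -
  let ?Z = "{x\<in>W. f x = 0}"
  have "bij_betw (\<lambda>(z, t). z + vsmult t w) (?Z \<times> UNIV) W"
  proof (rule bij_betw_imageI)
    show "inj_on (\<lambda>(z, t). z + vsmult t w) (?Z \<times> UNIV)"
    proof (rule inj_onI, clarify)
      fix z t z' t' assume z: "z \<in> W" "f z = 0" and z': "z' \<in> W" "f z' = 0"
        and eq: "z + vsmult t w = z' + vsmult t' w"
      then have "z' = z + vsmult (t - t') w" by (auto simp: fun_eq_iff algebra_simps)
      with shift[OF z(1), of "t - t'"] z z' have "(t - t')^2 * c = 0" by simp
      with \<open>c \<noteq> 0\<close> have "t = t'" by simp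
      with eq show "z = z' \<and> t = t'" by simp
    qed
  next
    show "(\<lambda>(z, t). z + vsmult t w) ` (?Z \<times> UNIV) = W"
    proof (intro equalityI subsetI)
      fix x assume "x \<in> W"
      obtain s where s: "s^2 = - f x / c" using sq by (metis surjD)
      have "x + vsmult s w \<in> ?Z"
        using W \<open>x \<in> W\<close> shift[of x s] s \<open>c \<noteq> 0\<close>
        by (simp add: linear_subspace_add linear_subspace_vsmult)
      moreover have "x = (x + vsmult s w) + vsmult (- s) w" by (simp add: fun_eq_iff)
      ultimately show "x \<in> (\<lambda>(z, t). z + vsmult t w) ` (?Z \<times> UNIV)"
        by (intro rev_image_eqI[of "(x + vsmult s w, - s)"]) simp_all
    qed (use W in \<open>auto simp: linear_subspace_add linear_subspace_vsmult\<close>)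
  qed
  then have "card (?Z \<times> (UNIV :: 'a set)) = card W" by (rule bij_betw_same_card)
  then show ?thesis by (simp add: card_cartesian_product mult.commute)
qed

section \<open>Hyperbolic pairs of Q_0\<close>

abbreviation partner :: "nat \<Rightarrow> nat \<Rightarrow> nat" where
  "partner n i \<equiv> 2*n+3-i"

definition coords :: "nat \<Rightarrow> nat set \<Rightarrow> nat set" where
  "coords n J = {1, 2*n+2} \<union> J \<union> partner n ` J"

(* The part of Q_0 on X_1, X_2n+2 and the hyperbolic pairs (X_i, X_2n+3-i), i in J; in
  characteristic 2, bform_on is its polar form. *)
definition qform_on :: "nat \<Rightarrow> 'a::field \<Rightarrow> nat set \<Rightarrow> (nat \<Rightarrow> 'a) \<Rightarrow> 'a" where
  "qform_on n \<delta> J x = norm_form \<delta> (x 1) (x (2*n+2)) + (\<Sum>i\<in>J. x i * x (partner n i))"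

definition bform_on :: "nat \<Rightarrow> nat set \<Rightarrow> (nat \<Rightarrow> 'a::field) \<Rightarrow> (nat \<Rightarrow> 'a) \<Rightarrow> 'a" where
  "bform_on n J x y = x 1 * y (2*n+2) + x (2*n+2) * y 1
     + (\<Sum>i\<in>J. x i * y (partner n i) + x (partner n i) * y i)"

lemma partner_neq:
  assumes "J \<subseteq> {2..n+1}" "i \<in> J" "a \<in> J"
  shows "partner n i \<noteq> a"
proof -
  have "i \<le> n + 1" "a \<le> n + 1" using assms by auto
  then show ?thesis by simp
qed

lemma qform_on_add:
  fixes x y :: "nat \<Rightarrow> 'a::field"
  assumes "CHAR('a) = 2"
  shows "qform_on n \<delta> J (x + y) = qform_on n \<delta> J x + qform_on n \<delta> J y + bform_on n J x y"
proof -
  have two: "(2::'a) = 0" using of_nat_CHAR[where 'a='a] assms by simp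
  have "(\<Sum>i\<in>J. (x i + y i) * (x (partner n i) + y (partner n i))) =
      (\<Sum>i\<in>J. x i * x (partner n i)) + (\<Sum>i\<in>J. y i * y (partner n i))
      + (\<Sum>i\<in>J. x i * y (partner n i) + x (partner n i) * y i)"
    by (simp add: sum.distrib [symmetric] algebra_simps)
  then have "qform_on n \<delta> J (x + y) = qform_on n \<delta> J x + qform_on n \<delta> J y + bform_on n J x y
      + 2 * (x 1 * y 1 + \<delta> * x (2*n+2) * y (2*n+2))"
    by (simp add: qform_on_def bform_on_def norm_form_def power2_eq_square algebra_simps)
  with two show ?thesis by simp
qed

lemma qform_on_vsmult: "qform_on n \<delta> J (vsmult c x) = c^2 * qform_on n \<delta> J x"
  by (simp add: qform_on_def norm_form_def sum_distrib_left power2_eq_square algebra_simps)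

lemma bform_on_unit:
  assumes "a \<in> J" "J \<subseteq> {2..n+1}"
  shows "bform_on n J (0(a := 1)) x = x (partner n a)"
proof -
  have "(\<Sum>i\<in>J. (0(a := 1)) i * x (partner n i) + (0(a := 1)) (partner n i) * x i)
      = (\<Sum>i\<in>J. if i = a then x (partner n a) else 0)"
    using assms partner_neq by (intro sum.cong) auto
  also have "\<dots> = x (partner n a)"
    using assms(1) finite_subset[OF assms(2)] by (simp add: sum.delta)
  finally show ?thesis using assms by (auto simp: bform_on_def)
qed

lemma qform_on_zero_coord:
  assumes "a \<in> J" "J \<subseteq> {2..n+1}" "x (partner n a) = 0"
  shows "qform_on n \<delta> (J - {a}) (x(a := 0)) = qform_on n \<delta> J x"
proof -
  have "(\<Sum>i\<in>J. x i * x (partner n i)) = (\<Sum>i\<in>J - {a}. x i * x (partner n i))"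
    using assms finite_subset[OF assms(2)] by (simp add: sum.remove)
  also have "\<dots> = (\<Sum>i\<in>J - {a}. (x(a := 0)) i * (x(a := 0)) (partner n i))"
    using assms partner_neq by (intro sum.cong) auto
  finally show ?thesis using assms by (auto simp: qform_on_def)
qed

lemma bform_on_zero_coord:
  assumes "a \<in> J" "J \<subseteq> {2..n+1}" "x (partner n a) = 0" "y (partner n a) = 0"
  shows "bform_on n (J - {a}) (x(a := 0)) (y(a := 0)) = bform_on n J x y"
proof -
  have "(\<Sum>i\<in>J. x i * y (partner n i) + x (partner n i) * y i)
      = (\<Sum>i\<in>J - {a}. x i * y (partner n i) + x (partner n i) * y i)"
    using assms finite_subset[OF assms(2)] by (simp add: sum.remove)
  also have "\<dots> = (\<Sum>i\<in>J - {a}. (x(a := 0)) i * (y(a := 0)) (partner n i)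
      + (x(a := 0)) (partner n i) * (y(a := 0)) i)"
    using assms partner_neq by (intro sum.cong) auto
  finally show ?thesis using assms by (auto simp: bform_on_def)
qed

lemma support_coord_quotient:
  assumes "\<forall>x\<in>S. \<forall>i. i \<notin> coords n J \<longrightarrow> x i = 0"
  shows "\<forall>y\<in>coord_quotient a (partner n a) S. \<forall>i. i \<notin> coords n (J - {a}) \<longrightarrow> y i = 0"
  using assms by (auto simp: coord_quotient_def coords_def)

lemma isotropic_coord_quotient:
  assumes a: "a \<in> J" "J \<subseteq> {2..n+1}" and "\<forall>x\<in>S. \<forall>y\<in>S. bform_on n J x y = 0"
  shows "\<forall>y\<in>coord_quotient a (partner n a) S. \<forall>z\<in>coord_quotient a (partner n a) S.
    bform_on n (J - {a}) y z = 0"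
proof (intro ballI)
  fix y z assume "y \<in> coord_quotient a (partner n a) S" "z \<in> coord_quotient a (partner n a) S"
  then obtain x x' where "x \<in> S" "x (partner n a) = 0" "y = x(a := 0)"
    and "x' \<in> S" "x' (partner n a) = 0" "z = x'(a := 0)"
    by (auto simp: coord_quotient_def)
  with assms(3) bform_on_zero_coord[OF a, of x x'] show "bform_on n (J - {a}) y z = 0" by simp
qed

lemma card_le_card_coord_quotient_isotropic:
  fixes S :: "(nat \<Rightarrow> 'a::{field,finite}) set"
  assumes a: "a \<in> J" "J \<subseteq> {2..n+1}" and S: "linear_subspace S" "finite S"
    and "\<forall>x\<in>S. \<forall>y\<in>S. bform_on n J x y = 0"
  shows "card S \<le> CARD('a) * card (coord_quotient a (partner n a) S)"
proof (rule card_le_card_coord_quotient[OF S])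
  show "\<forall>x\<in>S. x (partner n a) = 0" if "0(a := 1) \<in> S"
    using that assms(5) bform_on_unit[OF a] by metis
qed

lemma nonsingular_vector_exists:
  fixes S :: "(nat \<Rightarrow> 'a::{field,finite}) set"
  assumes irr: "irreducible [:\<delta>, 1, 1:]" and J: "J \<subseteq> {2..n+1}"
    and S: "linear_subspace S" "\<forall>x\<in>S. \<forall>i. i \<notin> coords n J \<longrightarrow> x i = 0"
    and isotropic: "\<forall>x\<in>S. \<forall>y\<in>S. bform_on n J x y = 0"
    and card: "CARD('a) ^ card J < card S"
  shows "\<exists>w\<in>S. (\<forall>i\<in>J. w (partner n i) = 0) \<and> qform_on n \<delta> J w \<noteq> 0"
  using finite_subset[OF J finite_atLeastAtMost] J S isotropic card
proof (induction J arbitrary: S rule: finite_induct)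
  case empty
  from empty.prems(5) have "S \<noteq> {0}" by auto
  with \<open>linear_subspace S\<close> obtain w where "w \<in> S" "w \<noteq> 0" by (auto simp: linear_subspace_def)
  then obtain i where "w i \<noteq> 0" by (auto simp: fun_eq_iff)
  moreover have "w i = 0" if "i \<noteq> 1" "i \<noteq> 2*n+2"
    using empty.prems(3) \<open>w \<in> S\<close> that by (simp add: coords_def)
  ultimately have "w 1 \<noteq> 0 \<or> w (2*n+2) \<noteq> 0" by metis
  with irr \<open>w \<in> S\<close> show ?case by (auto simp: qform_on_def norm_form_eq_0_iff)
next
  case (insert a J)
  let ?S' = "coord_quotient a (partner n a) S"
  have a: "a \<in> insert a J" "insert a J \<subseteq> {2..n+1}" and J: "J \<subseteq> {2..n+1}"
    and J_eq: "insert a J - {a} = J"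
    using insert.prems insert.hyps by auto
  have "finite S" using insert.prems(5) by (intro card_ge_0_finite) simp
  then have "card S \<le> CARD('a) * card ?S'"
    using card_le_card_coord_quotient_isotropic[OF a insert.prems(2)] insert.prems(4) by blast
  moreover have "CARD('a) * CARD('a) ^ card J < card S" using insert.prems(5) insert.hyps by simp
  ultimately have "CARD('a) * CARD('a) ^ card J < CARD('a) * card ?S'" by linarith
  then have "CARD('a) ^ card J < card ?S'"
    by (rule mult_less_cancel1 [THEN iffD1, THEN conjunct2])
  with insert.IH[OF J] obtain w where w: "w \<in> ?S'" "\<forall>i\<in>J. w (partner n i) = 0"
      "qform_on n \<delta> J w \<noteq> 0"
    using linear_subspace_coord_quotient[OF insert.prems(2)]
      support_coord_quotient[OF insert.prems(3), of a]
      isotropic_coord_quotient[OF a insert.prems(4)]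
    unfolding J_eq by blast
  then obtain x where x: "x \<in> S" "x (partner n a) = 0" "w = x(a := 0)"
    by (auto simp: coord_quotient_def)
  have "\<forall>i\<in>insert a J. x (partner n i) = 0" using w(2) x partner_neq[OF a(2)] by auto
  moreover have "qform_on n \<delta> (insert a J) x \<noteq> 0"
    using w(3) x qform_on_zero_coord[OF a, where x = x and \<delta> = \<delta>] J_eq by simp
  ultimately show ?case using x(1) by blast
qed

section \<open>The quadric Q_mu on a generator\<close>

lemma coords_generator: "coords n {2..n+1} = {1..2*n+2}"
proof -
  have "partner n ` {2..n+1} = {n+2..2*n+1}"
  proof (intro equalityI subsetI)
    fix j assume "j \<in> {n+2..2*n+1}"
    then show "j \<in> partner n ` {2..n+1}" by (intro image_eqI[of _ _ "partner n j"]) auto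
  qed auto
  then show ?thesis by (auto simp: coords_def)
qed

lemma B0_eq_bform_on: "B0 n x y = bform_on n {2..n+1} x y"
proof -
  have split: "{1..2*n+2} = insert 1 (insert (2*n+2) ({2..n+1} \<union> {n+2..2*n+1}))" by auto
  have reflect: "(\<Sum>i=n+2..2*n+1. x i * y (partner n i)) = (\<Sum>i=2..n+1. x (partner n i) * y i)"
    by (rule sum.reindex_bij_witness[of _ "partner n" "partner n"]) auto
  have "B0 n x y = x 1 * y (2*n+2) + x (2*n+2) * y 1 + (\<Sum>i=2..n+1. x i * y (partner n i))
      + (\<Sum>i=n+2..2*n+1. x i * y (partner n i))"
    unfolding B0_def split by (simp add: sum.union_disjoint algebra_simps)
  then show ?thesis unfolding reflect bform_on_def by (simp add: sum.distrib algebra_simps)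
qed

lemma Qform_eq:
  "Qform n \<delta> \<mu> x = qform_on n \<delta> {2..n+1} x + \<mu> * norm_form \<delta> (x (2*n)) (x (2*n+1))"
  by (simp add: Qform_def qform_on_def norm_form_def)

lemma Qform_vsmult: "Qform n \<delta> \<mu> (vsmult c x) = c^2 * Qform n \<delta> \<mu> x"
  by (simp add: Qform_eq qform_on_vsmult norm_form_def power2_eq_square algebra_simps)

lemma Qform_add:
  fixes x y :: "nat \<Rightarrow> 'a::field"
  assumes "CHAR('a) = 2" "y (2*n) = 0" "y (2*n+1) = 0"
  shows "Qform n \<delta> \<mu> (x + y) = Qform n \<delta> \<mu> x + Qform n \<delta> \<mu> y + B0 n x y"
  using assms by (simp add: Qform_eq qform_on_add B0_eq_bform_on norm_form_def)

lemma card_zeros_Qform_generator: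
  fixes \<delta> \<mu> :: "'a::{field,finite}"
  assumes char: "CHAR('a) = 2" and "n \<ge> 2" and irr: "irreducible [:\<delta>, 1, 1:]"
    and "W \<in> generators_W0 n"
  shows "card {x\<in>W. Qform n \<delta> \<mu> x = 0} = CARD('a) ^ n"
proof -
  have dim: "subspace_dim n (n+1) W" and isotropic: "\<forall>x\<in>W. \<forall>y\<in>W. B0 n x y = 0"
    using assms(4) by (auto simp: generators_W0_def)
  have W: "linear_subspace W" using dim by (rule subspace_dim_linear_subspace)
  have "CARD('a) ^ card {2..n+1} < card W"
    using card_subspace_dim[OF dim] two_le_CARD[where 'a='a] by simp
  moreover have "\<forall>x\<in>W. \<forall>i. i \<notin> coords n {2..n+1} \<longrightarrow> x i = 0"
    using subspace_dim_subset_vecs[OF dim] unfolding coords_generator by (auto simp: vecs_def)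
  moreover have "\<forall>x\<in>W. \<forall>y\<in>W. bform_on n {2..n+1} x y = 0"
    using isotropic by (simp add: B0_eq_bform_on)
  ultimately obtain w where w: "w \<in> W" "\<forall>i\<in>{2..n+1}. w (partner n i) = 0"
      "qform_on n \<delta> {2..n+1} w \<noteq> 0"
    using nonsingular_vector_exists[OF irr order_refl W] by blast
  from w(2) \<open>n \<ge> 2\<close> have "w (2*n) = 0" "w (2*n+1) = 0"
    using bspec[OF w(2), of 3] bspec[OF w(2), of 2] by auto
  with w(3) have "Qform n \<delta> \<mu> w \<noteq> 0" by (simp add: Qform_eq norm_form_def)
  moreover have "Qform n \<delta> \<mu> (x + vsmult t w) = Qform n \<delta> \<mu> x + t^2 * Qform n \<delta> \<mu> w"
    if "x \<in> W" for x t
    using Qform_add[OF char, where x = x and y = "vsmult t w" and \<delta> = \<delta> and \<mu> = \<mu>]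
      \<open>w (2*n) = 0\<close> \<open>w (2*n+1) = 0\<close> isotropic that linear_subspace_vsmult[OF W w(1)]
    by (simp add: Qform_vsmult)
  ultimately have "card W = CARD('a) * card {x\<in>W. Qform n \<delta> \<mu> x = 0}"
    using W w(1) surj_power2_CHAR_2[OF char] by (intro card_eq_CARD_mult_card_zeros) auto
  with card_subspace_dim[OF dim] show ?thesis by simp
qed

theorem mainTheorem6:
  fixes \<delta> \<mu> :: "'a::{field,finite}" and n :: nat
  assumes "CHAR('a) = 2"
    and "n \<ge> 2"
    and "irreducible [:\<delta>, 1, 1:]"
    and "\<mu> \<noteq> 0"
  shows "m_ovoid_W0 n ((card (UNIV :: 'a set) ^ n - 1) div (card (UNIV :: 'a set) - 1)) (quadric n \<delta> \<mu>)"
  unfolding m_ovoid_W0_def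
proof (intro conjI ballI)
  show "quadric n \<delta> \<mu> \<subseteq> proj_points n" by (auto simp: quadric_def)
next
  fix W :: "(nat \<Rightarrow> 'a) set" assume W: "W \<in> generators_W0 n"
  let ?Z = "{x\<in>W. Qform n \<delta> \<mu> x = 0}"
  have dim: "subspace_dim n (n+1) W" using W by (simp add: generators_W0_def)
  have lin: "linear_subspace W" using dim by (rule subspace_dim_linear_subspace)
  have "(CARD('a) - 1) * card {P \<in> proj_points n. P \<subseteq> ?Z} = card (?Z - {0})"
    using finite_subspace_dim[OF dim] subspace_dim_subset_vecs[OF dim]
      linear_subspace_vsmult[OF lin]
    by (intro card_points_in_cone) (auto simp: Qform_vsmult)
  also have "\<dots> = CARD('a) ^ n - 1"
    using card_zeros_Qform_generator[OF assms(1-3) W] linear_subspace_zero[OF lin]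
    by (simp add: Qform_def)
  also have "{P \<in> proj_points n. P \<subseteq> ?Z} = {P \<in> quadric n \<delta> \<mu>. P \<subseteq> W}"
    by (auto simp: quadric_def)
  finally have "(CARD('a) - 1) * card {P \<in> quadric n \<delta> \<mu>. P \<subseteq> W} = CARD('a) ^ n - 1" .
  moreover have "CARD('a) - 1 \<noteq> 0" using two_le_CARD[where 'a='a] by simp
  ultimately show "card {P \<in> quadric n \<delta> \<mu>. P \<subseteq> W} = (CARD('a) ^ n - 1) div (CARD('a) - 1)"
    by (metis nonzero_mult_div_cancel_left)
qed

end
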